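(* $\mathrm{NID}\notin\Pi_1$; that is, there is no computable function $f:\{0,1\}^*\times\{0,1\}^*\times\omega\to\mathbb{Q}$ which is nonincreasing in $s$ and satisfies $\lim_{s\to\infty}f(x,y,s)=\mathrm{NID}(x,y)$ for all $x,y$.
   Context: Fix a universal prefix-free machine $U$. $K(x)$ denotes prefix-free Kolmogorov complexity and $K(x\mid y)$ conditional prefix-free complexity. For binary strings $x,y$ let $E(x,y)=\max\{K(x\mid y),K(y\mid x)\}$ and $\mathrm{NID}(x,y)=\dfrac{E(x,y)}{\max\{K(x),K(y)\}}$ (a rational number). A function $F$ (on pairs of strings, rational-valued) is in $\Pi_1$ if it has a computable approximation $f$ with $\lim_s f(\cdot,s)=F$ that is nonincreasing in $s$. *)

theory Defs
  imports Complex_Main "HOL-Library.Nat_Bijection"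
begin

datatype recf = Zero | Succ | Proj nat | Comp recf "recf list" | Prim recf recf | Mn recf

inductive eval :: "recf \<Rightarrow> nat list \<Rightarrow> nat \<Rightarrow> bool" where
  ev_zero: "eval Zero xs 0"
| ev_succ: "eval Succ (x # xs) (Suc x)"
| ev_proj: "i < length xs \<Longrightarrow> eval (Proj i) xs (xs ! i)"
| ev_comp: "list_all2 (\<lambda>g y. eval g xs y) gs ys \<Longrightarrow> eval f ys z \<Longrightarrow> eval (Comp f gs) xs z"
| ev_prim0: "eval f xs y \<Longrightarrow> eval (Prim f g) (0 # xs) y"
| ev_primS: "eval (Prim f g) (n # xs) y \<Longrightarrow> eval g (y # n # xs) z \<Longrightarrow> eval (Prim f g) (Suc n # xs) z"
| ev_mn: "eval f (n # xs) 0 \<Longrightarrow> (\<forall>m<n. \<exists>k. eval f (m # xs) (Suc k)) \<Longrightarrow> eval (Mn f) xs n"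

type_synonym bstr = "bool list"

fun scode :: "bstr \<Rightarrow> nat" where
  "scode [] = 0"
| "scode (False # xs) = 2 * scode xs + 1"
| "scode (True # xs) = 2 * scode xs + 2"

definition rcode :: "rat \<Rightarrow> nat" where
  "rcode q = (case quotient_of q of (a, b) \<Rightarrow> prod_encode (int_encode a, int_encode b))"

text \<open>A conditional machine: program p, condition y, output.\<close>
type_synonym machine = "bstr \<Rightarrow> bstr \<Rightarrow> bstr option"

definition partial_computable_machine :: "machine \<Rightarrow> bool" where
  "partial_computable_machine M \<longleftrightarrow>
     (\<exists>r. \<forall>p y z. eval r [scode p, scode y] z \<longleftrightarrow> (\<exists>x. M p y = Some x \<and> z = scode x))"

definition prefix_free_machine :: "machine \<Rightarrow> bool" where
  "prefix_free_machine M \<longleftrightarrow>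
     (\<forall>y p q. M p y \<noteq> None \<longrightarrow> M (p @ q) y \<noteq> None \<longrightarrow> q = [])"

definition universal_pf_machine :: "machine \<Rightarrow> bool" where
  "universal_pf_machine U \<longleftrightarrow>
     partial_computable_machine U \<and> prefix_free_machine U \<and>
     (\<forall>M. partial_computable_machine M \<and> prefix_free_machine M \<longrightarrow>
        (\<exists>\<sigma>. \<forall>p y. U (\<sigma> @ p) y = M p y))"

definition Kc :: "machine \<Rightarrow> bstr \<Rightarrow> bstr \<Rightarrow> nat" where
  "Kc U x y = (LEAST n. \<exists>p. length p = n \<and> U p y = Some x)"

definition K :: "machine \<Rightarrow> bstr \<Rightarrow> nat" where
  "K U x = Kc U x []"

definition E :: "machine \<Rightarrow> bstr \<Rightarrow> bstr \<Rightarrow> nat" where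
  "E U x y = max (Kc U x y) (Kc U y x)"

definition NID :: "machine \<Rightarrow> bstr \<Rightarrow> bstr \<Rightarrow> rat" where
  "NID U x y = of_nat (E U x y) / of_nat (max (K U x) (K U y))"

definition computable_rat3 :: "(bstr \<Rightarrow> bstr \<Rightarrow> nat \<Rightarrow> rat) \<Rightarrow> bool" where
  "computable_rat3 f \<longleftrightarrow>
     (\<exists>r. \<forall>x y s z. eval r [scode x, scode y, s] z \<longleftrightarrow> z = rcode (f x y s))"

definition in_Pi1 :: "(bstr \<Rightarrow> bstr \<Rightarrow> rat) \<Rightarrow> bool" where
  "in_Pi1 F \<longleftrightarrow>
     (\<exists>f. computable_rat3 f \<and>
        (\<forall>x y s. f x y (Suc s) \<le> f x y s) \<and>
        (\<forall>x y. (\<lambda>s. real_of_rat (f x y s)) \<longlonglongrightarrow> real_of_rat (F x y)))"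

end

(*
  Suppose f approximates NID from above. Along the diagonal, NID(x,x) = K(x|x)/K(x) with
  K(x|x) bounded and K(x) unbounded, so NID(x,x) becomes arbitrarily small, and f sees this at
  some finite stage. A machine reading the program 1^m 0 can therefore search for an x and a
  stage s with f(x,x,s) < 1/(2m+1) and print x. Run through the universal machine with its
  coding prefix sigma, taking m = |sigma|, the printed x has K(x) <= 2m+1, while K(x|x) >= 1;
  hence NID(x,x) >= 1/(2m+1) > f(x,x,s), contradicting that f stays above NID.
*)

theory Submission
  imports Defs
begin

section \<open>Total recursive functions\<close>

named_theorems total_recursive_intros

definition computes :: "recf \<Rightarrow> nat \<Rightarrow> (nat list \<Rightarrow> nat) \<Rightarrow> bool" where
  "computes r k F \<longleftrightarrow> (\<forall>xs z. length xs = k \<longrightarrow> (eval r xs z \<longleftrightarrow> z = F xs))"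

definition total_recursive :: "nat \<Rightarrow> (nat list \<Rightarrow> nat) \<Rightarrow> bool" where
  "total_recursive k F \<longleftrightarrow> (\<exists>r. computes r k F)"

inductive_cases eval_ZeroE: "eval Zero xs z"
inductive_cases eval_SuccE: "eval Succ xs z"
inductive_cases eval_ProjE: "eval (Proj i) xs z"
inductive_cases eval_CompE: "eval (Comp f gs) xs z"
inductive_cases eval_PrimE: "eval (Prim f g) xs z"
inductive_cases eval_MnE: "eval (Mn f) xs z"

lemma computes_Zero: "computes Zero k (\<lambda>_. 0)"
  by (auto simp: computes_def intro: ev_zero elim: eval_ZeroE)

lemma computes_Succ: "computes Succ 1 (\<lambda>xs. Suc (xs ! 0))"
  by (auto simp: computes_def length_Suc_conv intro: ev_succ elim: eval_SuccE)

lemma computes_Proj: "i < k \<Longrightarrow> computes (Proj i) k (\<lambda>xs. xs ! i)"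
  by (auto simp: computes_def intro: ev_proj elim: eval_ProjE)

lemma list_all2_eval_iff:
  assumes "list_all2 (\<lambda>g G. computes g k G) gs Gs" and "length xs = k"
  shows "list_all2 (\<lambda>g y. eval g xs y) gs ys \<longleftrightarrow> ys = map (\<lambda>G. G xs) Gs"
  using assms(1)
proof (induction arbitrary: ys rule: list_all2_induct)
  case (Cons g G gs Gs)
  then show ?case
    using assms(2) by (cases ys) (auto simp: computes_def)
qed simp

lemma computes_Comp:
  assumes "computes f (length gs) F" and "list_all2 (\<lambda>g G. computes g k G) gs Gs"
  shows "computes (Comp f gs) k (\<lambda>xs. F (map (\<lambda>G. G xs) Gs))"
  unfolding computes_def
proof (intro allI impI)
  fix xs :: "nat list" and z assume "length xs = k"
  note args = list_all2_eval_iff[OF assms(2) this]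
  have "length (map (\<lambda>G. G xs) Gs) = length gs"
    using assms(2) by (simp add: list_all2_lengthD)
  then show "eval (Comp f gs) xs z \<longleftrightarrow> z = F (map (\<lambda>G. G xs) Gs)"
    using assms(1) args by (auto simp: computes_def intro: ev_comp elim: eval_CompE)
qed

lemma computes_Prim:
  assumes "computes f k F" and "computes g (Suc (Suc k)) G"
    and "\<And>xs. length xs = k \<Longrightarrow> H (0 # xs) = F xs"
    and "\<And>n xs. length xs = k \<Longrightarrow> H (Suc n # xs) = G (H (n # xs) # n # xs)"
  shows "computes (Prim f g) (Suc k) H"
  unfolding computes_def
proof (intro allI impI)
  fix xs :: "nat list" and z assume "length xs = Suc k"
  then obtain n :: nat and ys where xs: "xs = n # ys" and ys: "length ys = k"
    by (cases xs) auto
  have "\<forall>z. eval (Prim f g) (n # ys) z \<longleftrightarrow> z = H (n # ys)"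
  proof (induction n)
    case 0
    show ?case
      using assms(1,3) ys by (auto simp: computes_def intro: ev_prim0 elim: eval_PrimE)
  next
    case (Suc n)
    then show ?case
      using assms(2,4) ys by (auto simp: computes_def intro: ev_primS elim: eval_PrimE)
  qed
  then show "eval (Prim f g) xs z \<longleftrightarrow> z = H xs"
    by (simp add: xs)
qed

lemma eval_Mn_iff:
  assumes "computes f (Suc k) F" and "length xs = k"
  shows "eval (Mn f) xs n \<longleftrightarrow> F (n # xs) = 0 \<and> (\<forall>m<n. F (m # xs) \<noteq> 0)"
proof -
  have f: "eval f (m # xs) z \<longleftrightarrow> z = F (m # xs)" for m z
    using assms by (simp add: computes_def)
  have "(\<exists>z. eval f (m # xs) (Suc z)) \<longleftrightarrow> F (m # xs) \<noteq> 0" for m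
    by (simp add: f) presburger
  then show ?thesis
    by (auto simp: f intro: ev_mn elim: eval_MnE)
qed

lemma eval_Mn_Least:
  assumes "computes f (Suc k) F" and "length xs = k"
  shows "eval (Mn f) xs n \<longleftrightarrow> (\<exists>m. F (m # xs) = 0) \<and> n = (LEAST m. F (m # xs) = 0)"
proof -
  have "P n \<and> (\<forall>m<n. \<not> P m) \<longleftrightarrow> (\<exists>m. P m) \<and> n = Least P" for P :: "nat \<Rightarrow> bool"
    by (auto intro: Least_equality[symmetric] LeastI dest: not_less_Least intro: leI)
  from this[of "\<lambda>m. F (m # xs) = 0"] show ?thesis
    unfolding eval_Mn_iff[OF assms] .
qed

lemma eval_Comp_single_iff:
  assumes "computes f 1 F"
  shows "eval (Comp f [g]) xs z \<longleftrightarrow> (\<exists>y. eval g xs y \<and> z = F [y])"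
  using assms by (auto simp: computes_def list_all2_Cons1 intro!: ev_comp elim!: eval_CompE) blast

lemma total_recursive_cong:
  "total_recursive k F \<Longrightarrow> (\<And>xs. length xs = k \<Longrightarrow> F xs = G xs) \<Longrightarrow> total_recursive k G"
  by (auto simp: total_recursive_def computes_def)

lemma total_recursive_proj [total_recursive_intros]: "i < k \<Longrightarrow> total_recursive k (\<lambda>xs. xs ! i)"
  unfolding total_recursive_def by (blast intro: computes_Proj)

lemma total_recursive_comp:
  assumes "total_recursive (length Gs) F" and "list_all (total_recursive k) Gs"
  shows "total_recursive k (\<lambda>xs. F (map (\<lambda>G. G xs) Gs))"
proof -
  obtain f where f: "computes f (length Gs) F"
    using assms(1) unfolding total_recursive_def ..
  have "\<exists>gs. list_all2 (\<lambda>g G. computes g k G) gs Gs"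
    using assms(2) by (induction Gs) (auto simp: total_recursive_def list_all2_Cons2)
  then obtain gs where gs: "list_all2 (\<lambda>g G. computes g k G) gs Gs" ..
  then have "length gs = length Gs"
    by (rule list_all2_lengthD)
  with f gs show ?thesis
    unfolding total_recursive_def by (metis computes_Comp)
qed

lemma total_recursive_compose1:
  assumes "total_recursive 1 (\<lambda>xs. h (xs ! 0))" and "total_recursive k G"
  shows "total_recursive k (\<lambda>xs. h (G xs))"
  using total_recursive_comp[of "[G]" "\<lambda>xs. h (xs ! 0)" k] assms by simp

lemma total_recursive_compose2:
  assumes "total_recursive 2 (\<lambda>xs. h (xs ! 0) (xs ! 1))"
    and "total_recursive k G" and "total_recursive k H"
  shows "total_recursive k (\<lambda>xs. h (G xs) (H xs))"
  using total_recursive_comp[of "[G, H]" "\<lambda>xs. h (xs ! 0) (xs ! 1)" k] assms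
  by (simp add: numeral_2_eq_2)

lemma total_recursive_compose3:
  assumes "total_recursive 3 (\<lambda>xs. h (xs ! 0) (xs ! 1) (xs ! 2))"
    and "total_recursive k G" and "total_recursive k H" and "total_recursive k I"
  shows "total_recursive k (\<lambda>xs. h (G xs) (H xs) (I xs))"
  using total_recursive_comp[of "[G, H, I]" "\<lambda>xs. h (xs ! 0) (xs ! 1) (xs ! 2)" k] assms
  by (simp add: numeral_3_eq_3)

lemma total_recursive_Suc [total_recursive_intros]:
  assumes "total_recursive k G"
  shows "total_recursive k (\<lambda>xs. Suc (G xs))"
proof -
  have "total_recursive 1 (\<lambda>xs. Suc (xs ! 0))"
    unfolding total_recursive_def by (blast intro: computes_Succ)
  from total_recursive_compose1[OF this assms] show ?thesis .
qed

lemma total_recursive_const [total_recursive_intros]: "total_recursive k (\<lambda>_. c)"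
proof (induction c)
  case 0
  show ?case
    unfolding total_recursive_def by (blast intro: computes_Zero)
qed (rule total_recursive_Suc)

lemma total_recursive_prim:
  assumes "total_recursive k F" and "total_recursive (Suc (Suc k)) G"
    and "\<And>xs. length xs = k \<Longrightarrow> H (0 # xs) = F xs"
    and "\<And>n xs. length xs = k \<Longrightarrow> H (Suc n # xs) = G (H (n # xs) # n # xs)"
  shows "total_recursive (Suc k) H"
  using assms computes_Prim unfolding total_recursive_def by metis

lemma total_recursive_nat_rec:
  assumes "total_recursive 2 (\<lambda>xs. g (xs ! 0) (xs ! 1))"
    and "h 0 = c" and "\<And>n. h (Suc n) = g (h n) n"
  shows "total_recursive 1 (\<lambda>xs. h (xs ! 0))"
proof -
  have "total_recursive (Suc (Suc 0)) (\<lambda>xs. g (xs ! 0) (xs ! 1))"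
    using assms(1) by (simp add: numeral_2_eq_2)
  then have "total_recursive (Suc 0) (\<lambda>xs. h (xs ! 0))"
    by (rule total_recursive_prim[OF total_recursive_const]) (auto simp: assms(2,3))
  then show ?thesis
    by simp
qed

lemma total_recursive_nat_rec2:
  assumes "total_recursive 1 (\<lambda>xs. f (xs ! 0))"
    and "total_recursive 3 (\<lambda>xs. g (xs ! 0) (xs ! 1) (xs ! 2))"
    and "\<And>x. h 0 x = f x" and "\<And>n x. h (Suc n) x = g (h n x) n x"
  shows "total_recursive 2 (\<lambda>xs. h (xs ! 0) (xs ! 1))"
proof -
  have "total_recursive (Suc (Suc 1)) (\<lambda>xs. g (xs ! 0) (xs ! 1) (xs ! 2))"
    using assms(2) by (simp add: numeral_3_eq_3)
  then have "total_recursive (Suc 1) (\<lambda>xs. h (xs ! 0) (xs ! 1))"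
    by (rule total_recursive_prim[OF assms(1)]) (auto simp: assms(3,4) length_Suc_conv)
  then show ?thesis
    by (simp add: numeral_2_eq_2)
qed

lemma total_recursive_Least:
  assumes "total_recursive (Suc k) F" and "\<And>xs. length xs = k \<Longrightarrow> \<exists>n. F (n # xs) = 0"
  shows "total_recursive k (\<lambda>xs. LEAST n. F (n # xs) = 0)"
proof -
  obtain f where f: "computes f (Suc k) F"
    using assms(1) unfolding total_recursive_def ..
  have "computes (Mn f) k (\<lambda>xs. LEAST n. F (n # xs) = 0)"
    unfolding computes_def by (simp add: eval_Mn_Least[OF f] assms(2))
  then show ?thesis
    unfolding total_recursive_def ..
qed

lemma total_recursive_add [total_recursive_intros]:
  assumes "total_recursive k G" and "total_recursive k H"
  shows "total_recursive k (\<lambda>xs. G xs + H xs)"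
proof -
  have "total_recursive 2 (\<lambda>xs. xs ! 0 + xs ! 1)"
    by (rule total_recursive_nat_rec2[where f = "\<lambda>x. x" and g = "\<lambda>y n x. Suc y"])
      (intro total_recursive_intros | simp)+
  from total_recursive_compose2[OF this assms] show ?thesis .
qed

lemma total_recursive_mult [total_recursive_intros]:
  assumes "total_recursive k G" and "total_recursive k H"
  shows "total_recursive k (\<lambda>xs. G xs * H xs)"
proof -
  have "total_recursive 2 (\<lambda>xs. xs ! 0 * xs ! 1)"
    by (rule total_recursive_nat_rec2[where f = "\<lambda>x. 0" and g = "\<lambda>y n x. y + x"])
      (intro total_recursive_intros | simp)+
  from total_recursive_compose2[OF this assms] show ?thesis .
qed

lemma total_recursive_pred:
  assumes "total_recursive k G"
  shows "total_recursive k (\<lambda>xs. G xs - 1)"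
proof -
  have "total_recursive 1 (\<lambda>xs. xs ! 0 - 1)"
    by (rule total_recursive_nat_rec[where g = "\<lambda>y n. n"]) (intro total_recursive_intros | simp)+
  from total_recursive_compose1[OF this assms] show ?thesis .
qed

lemma total_recursive_diff [total_recursive_intros]:
  assumes "total_recursive k G" and "total_recursive k H"
  shows "total_recursive k (\<lambda>xs. G xs - H xs)"
proof -
  have "total_recursive 2 (\<lambda>xs. xs ! 1 - xs ! 0)"
    by (rule total_recursive_nat_rec2[where f = "\<lambda>x. x" and g = "\<lambda>y n x. y - 1"])
      (intro total_recursive_intros total_recursive_pred | simp)+
  from total_recursive_compose2[OF this assms(2,1)] show ?thesis .
qed

lemma total_recursive_triangle [total_recursive_intros]:
  assumes "total_recursive k G"
  shows "total_recursive k (\<lambda>xs. triangle (G xs))"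
proof -
  have "total_recursive 1 (\<lambda>xs. triangle (xs ! 0))"
    by (rule total_recursive_nat_rec[where g = "\<lambda>y n. y + Suc n"])
      (intro total_recursive_intros | simp)+
  from total_recursive_compose1[OF this assms] show ?thesis .
qed

lemma triangle_mono: "a \<le> b \<Longrightarrow> triangle a \<le> triangle b"
  unfolding triangle_def by (intro div_le_mono mult_le_mono) auto

text \<open>The diagonal \<open>d\<close> of \<open>w\<close> in Cantor's enumeration is found by an unbounded but always
  successful search; this avoids the non-primitive recursion in \<open>prod_decode_aux\<close>.\<close>

lemma prod_decode_via_diagonal:
  fixes w :: nat
  defines "d \<equiv> LEAST d. w < triangle (Suc d)"
  shows "prod_decode w = (w - triangle d, d - (w - triangle d))"
proof -
  obtain a b where ab: "prod_decode w = (a, b)"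
    by (cases "prod_decode w")
  have w: "w = triangle (a + b) + a"
    using prod_decode_inverse[of w] by (simp add: ab prod_encode_def)
  have "d = a + b"
    unfolding d_def
  proof (rule Least_equality)
    show "w < triangle (Suc (a + b))"
      using w by simp
    fix d assume "w < triangle (Suc d)"
    then show "a + b \<le> d"
      using w triangle_mono[of "Suc d" "a + b"] by linarith
  qed
  then show ?thesis
    using ab w by simp
qed

lemma total_recursive_prod_decode:
  assumes "total_recursive k G"
  shows total_recursive_fst_prod_decode [total_recursive_intros]:
      "total_recursive k (\<lambda>xs. fst (prod_decode (G xs)))"
    and total_recursive_snd_prod_decode [total_recursive_intros]:
      "total_recursive k (\<lambda>xs. snd (prod_decode (G xs)))"
proof -
  have "total_recursive (Suc 1) (\<lambda>ys. Suc (ys ! 1) - triangle (Suc (ys ! 0)))"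
    by (intro total_recursive_intros) simp_all
  then have "total_recursive 1 (\<lambda>xs. LEAST d. Suc ((d # xs) ! 1) - triangle (Suc ((d # xs) ! 0)) = 0)"
    by (rule total_recursive_Least) (simp; blast intro: le_add2)
  then have diag: "total_recursive 1 (\<lambda>xs. LEAST d. xs ! 0 < triangle (Suc d))"
    by (rule total_recursive_cong) (simp add: less_Suc_eq_le)
  have "total_recursive 1 (\<lambda>xs. fst (prod_decode (xs ! 0)))"
    unfolding prod_decode_via_diagonal fst_conv by (intro total_recursive_intros diag) simp_all
  from total_recursive_compose1[OF this assms]
  show "total_recursive k (\<lambda>xs. fst (prod_decode (G xs)))" .
  have "total_recursive 1 (\<lambda>xs. snd (prod_decode (xs ! 0)))"
    unfolding prod_decode_via_diagonal snd_conv by (intro total_recursive_intros diag) simp_all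
  from total_recursive_compose1[OF this assms]
  show "total_recursive k (\<lambda>xs. snd (prod_decode (G xs)))" .
qed

definition decidable_pred :: "nat \<Rightarrow> (nat list \<Rightarrow> bool) \<Rightarrow> bool" where
  "decidable_pred k P \<longleftrightarrow> (\<exists>F. total_recursive k F \<and> (\<forall>xs. length xs = k \<longrightarrow> (F xs = 0 \<longleftrightarrow> P xs)))"

lemma decidable_pred_eq [total_recursive_intros]:
  assumes "total_recursive k G" and "total_recursive k H"
  shows "decidable_pred k (\<lambda>xs. G xs = H xs)"
proof -
  have "total_recursive k (\<lambda>xs. (G xs - H xs) + (H xs - G xs))"
    using assms by (intro total_recursive_intros)
  then show ?thesis
    unfolding decidable_pred_def by (intro exI[of _ "\<lambda>xs. (G xs - H xs) + (H xs - G xs)"]) auto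
qed

lemma decidable_pred_less [total_recursive_intros]:
  assumes "total_recursive k G" and "total_recursive k H"
  shows "decidable_pred k (\<lambda>xs. G xs < H xs)"
proof -
  have "total_recursive k (\<lambda>xs. Suc (G xs) - H xs)"
    using assms by (intro total_recursive_intros)
  then show ?thesis
    unfolding decidable_pred_def by (intro exI[of _ "\<lambda>xs. Suc (G xs) - H xs"]) auto
qed

lemma decidable_pred_conj [total_recursive_intros]:
  assumes "decidable_pred k P" and "decidable_pred k Q"
  shows "decidable_pred k (\<lambda>xs. P xs \<and> Q xs)"
proof -
  obtain F G where "total_recursive k F" "\<forall>xs. length xs = k \<longrightarrow> (F xs = 0 \<longleftrightarrow> P xs)"
    and "total_recursive k G" "\<forall>xs. length xs = k \<longrightarrow> (G xs = 0 \<longleftrightarrow> Q xs)"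
    using assms unfolding decidable_pred_def by blast
  then show ?thesis
    unfolding decidable_pred_def
    by (intro exI[of _ "\<lambda>xs. F xs + G xs"]) (auto intro: total_recursive_add)
qed

section \<open>Search machines\<close>

lemma inj_scode: "inj scode"
proof (rule injI)
  show "scode x = scode y \<Longrightarrow> x = y" for x y
  proof (induction x arbitrary: y rule: scode.induct)
    case 1
    then show ?case by (cases y rule: scode.cases) auto
  next
    case (2 xs)
    then show ?case by (cases y rule: scode.cases) (auto, presburger)
  next
    case (3 xs)
    then show ?case by (cases y rule: scode.cases) (auto, presburger)
  qed
qed

lemma surj_scode: "surj scode"
proof -
  have "\<exists>x. scode x = n" for n
  proof (induction n rule: less_induct)
    case (less n)
    have "n = 0 \<or> (\<exists>k. n = 2 * k + 1) \<or> (\<exists>k. n = 2 * k + 2)"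
      by presburger
    then consider "n = 0" | k where "n = 2 * k + 1" | k where "n = 2 * k + 2"
      by blast
    then show ?case
    proof cases
      case 1
      then show ?thesis by (intro exI[of _ "[]"]) simp
    next
      case (2 k)
      with less obtain x where "scode x = k" by fastforce
      with 2 show ?thesis by (intro exI[of _ "False # x"]) simp
    next
      case (3 k)
      with less obtain x where "scode x = k" by fastforce
      with 3 show ?thesis by (intro exI[of _ "True # x"]) simp
    qed
  qed
  then show ?thesis
    by (metis surjI)
qed

lemma inv_scode_scode [simp]: "inv scode (scode x) = x"
  by (rule inv_f_f[OF inj_scode])

lemma scode_inv_scode [simp]: "scode (inv scode n) = n"
  by (rule surj_f_inv_f[OF surj_scode])

definition unary_code :: "nat \<Rightarrow> bstr" where
  "unary_code m = replicate m True @ [False]"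

lemma unary_code_append_eq: "unary_code m @ q = unary_code m' \<Longrightarrow> q = []"
  unfolding unary_code_def
proof (induction m arbitrary: m')
  case 0
  then show ?case by (cases m') auto
next
  case (Suc m)
  then show ?case by (cases m') auto
qed

lemma scode_unary_code_eq_iff [simp]: "scode (unary_code m) = scode (unary_code m') \<longleftrightarrow> m = m'"
  using inj_scode[THEN injD, of "unary_code m" "unary_code m'"]
  by (auto simp: unary_code_def dest: arg_cong[of _ _ length])

lemma total_recursive_scode_unary_code [total_recursive_intros]:
  assumes "total_recursive k G"
  shows "total_recursive k (\<lambda>xs. scode (unary_code (G xs)))"
proof -
  have "total_recursive 1 (\<lambda>xs. scode (unary_code (xs ! 0)))"
    by (rule total_recursive_nat_rec[where g = "\<lambda>y n. Suc (Suc (y + y))"])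
      ((intro total_recursive_intros | simp add: unary_code_def)+)
  from total_recursive_compose1[OF this assms] show ?thesis .
qed

lemma prefix_free_machine_unary:
  assumes "\<And>p y. M p y \<noteq> None \<Longrightarrow> \<exists>m. p = unary_code m"
  shows "prefix_free_machine M"
  unfolding prefix_free_machine_def
  by (metis assms unary_code_append_eq)

definition search_machine :: "(nat \<Rightarrow> nat \<Rightarrow> nat \<Rightarrow> bool) \<Rightarrow> (nat \<Rightarrow> nat) \<Rightarrow> machine" where
  "search_machine P g p y =
     (if \<exists>w. P w (scode p) (scode y)
      then Some (inv scode (g (LEAST w. P w (scode p) (scode y)))) else None)"

lemma partial_computable_search_machine:
  assumes "decidable_pred 3 (\<lambda>xs. P (xs ! 0) (xs ! 1) (xs ! 2))"
    and "total_recursive 1 (\<lambda>xs. g (xs ! 0))"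
  shows "partial_computable_machine (search_machine P g)"
proof -
  obtain F where F: "total_recursive (Suc 2) F"
    and P: "\<And>xs. length xs = 3 \<Longrightarrow> F xs = 0 \<longleftrightarrow> P (xs ! 0) (xs ! 1) (xs ! 2)"
    using assms(1) unfolding decidable_pred_def by auto
  obtain r where r: "computes r (Suc 2) F"
    using F unfolding total_recursive_def ..
  obtain rg where rg: "computes rg 1 (\<lambda>xs. g (xs ! 0))"
    using assms(2) unfolding total_recursive_def ..
  have "eval (Comp rg [Mn r]) [scode p, scode y] z \<longleftrightarrow>
      (\<exists>x. search_machine P g p y = Some x \<and> z = scode x)" for p y z
  proof -
    have "eval (Mn r) [scode p, scode y] n \<longleftrightarrow>
        (\<exists>w. P w (scode p) (scode y)) \<and> n = (LEAST w. P w (scode p) (scode y))" for n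
      using eval_Mn_Least[OF r, of "[scode p, scode y]"] by (simp add: P)
    then show ?thesis
      unfolding eval_Comp_single_iff[OF rg] search_machine_def by auto
  qed
  then show ?thesis
    unfolding partial_computable_machine_def by blast
qed

lemma prefix_free_search_machine:
  assumes "\<And>w c y. P w c y \<Longrightarrow> \<exists>m. c = scode (unary_code m)"
  shows "prefix_free_machine (search_machine P g)"
proof (rule prefix_free_machine_unary)
  fix p y assume "search_machine P g p y \<noteq> None"
  then obtain m where "scode p = scode (unary_code m)"
    unfolding search_machine_def by (metis assms)
  then show "\<exists>m. p = unary_code m"
    using inj_scode[THEN injD] by blast
qed

definition decoder :: machine where
  "decoder = search_machine (\<lambda>w c _. c = scode (unary_code w)) (\<lambda>w. w)"

lemma decoder_unary_code: "decoder (unary_code (scode x)) y = Some x"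
  by (simp add: decoder_def search_machine_def Least_equality)

lemma decoder_machine: "partial_computable_machine decoder" "prefix_free_machine decoder"
  unfolding decoder_def
  by (rule partial_computable_search_machine prefix_free_search_machine;
      (intro total_recursive_intros | simp)+)+

definition copier :: machine where
  "copier = search_machine (\<lambda>w c y. c = scode (unary_code 0) \<and> w = y) (\<lambda>w. w)"

lemma copier_unary_code: "copier (unary_code 0) y = Some y"
  by (simp add: copier_def search_machine_def Least_equality)

lemma copier_machine: "partial_computable_machine copier" "prefix_free_machine copier"
  unfolding copier_def
  by (rule partial_computable_search_machine prefix_free_search_machine;
      (intro total_recursive_intros | blast | simp)+)+

definition code_below :: "nat \<Rightarrow> nat \<Rightarrow> bool" where
  "code_below z k \<longleftrightarrow> fst (prod_decode z) * k < snd (prod_decode z)"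

lemma decidable_pred_code_below [total_recursive_intros]:
  "total_recursive k G \<Longrightarrow> total_recursive k H \<Longrightarrow> decidable_pred k (\<lambda>xs. code_below (G xs) (H xs))"
  unfolding code_below_def by (intro total_recursive_intros)

lemma code_below_rcode_iff:
  fixes q :: rat
  assumes "0 \<le> q"
  shows "code_below (rcode q) k \<longleftrightarrow> q * of_nat k < 1"
proof -
  obtain a b where ab: "quotient_of q = (a, b)"
    by (cases "quotient_of q")
  have b: "0 < b" and q: "q = of_int a / of_int b"
    using quotient_of_denom_pos[OF ab] quotient_of_div[OF ab] by auto
  have a: "0 \<le> a"
    using assms b by (simp add: q zero_le_divide_iff)
  have "code_below (rcode q) k \<longleftrightarrow> nat a * k < nat b"
    using a b by (simp add: code_below_def rcode_def ab int_encode_def sum_encode_def)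
  also have "\<dots> \<longleftrightarrow> a * int k < b"
    using a b by (subst of_nat_less_iff[where 'a = int, symmetric]) simp
  also have "\<dots> \<longleftrightarrow> (of_int (a * int k) :: rat) < of_int b"
    by (simp only: of_int_less_iff)
  also have "\<dots> \<longleftrightarrow> q * of_nat k < 1"
    using b by (simp add: q divide_less_eq)
  finally show ?thesis .
qed

lemma total_recursive_computable_rat3:
  assumes "computable_rat3 f"
  shows "total_recursive 3 (\<lambda>xs. rcode (f (inv scode (xs ! 0)) (inv scode (xs ! 1)) (xs ! 2)))"
proof -
  obtain r where r: "\<forall>x y s z. eval r [scode x, scode y, s] z \<longleftrightarrow> z = rcode (f x y s)"
    using assms unfolding computable_rat3_def ..
  have "computes r 3 (\<lambda>xs. rcode (f (inv scode (xs ! 0)) (inv scode (xs ! 1)) (xs ! 2)))"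
    unfolding computes_def
  proof (intro allI impI)
    fix xs :: "nat list" and z assume "length xs = 3"
    then obtain a b s where xs: "xs = [a, b, s]"
      by (auto simp: numeral_3_eq_3 length_Suc_conv)
    show "eval r xs z \<longleftrightarrow> z = rcode (f (inv scode (xs ! 0)) (inv scode (xs ! 1)) (xs ! 2))"
      using r[rule_format, of "inv scode a" "inv scode b" s z] by (simp add: xs)
  qed
  then show ?thesis
    unfolding total_recursive_def ..
qed

lemma small_diagonal_value_machine:
  assumes "computable_rat3 f" and "\<And>x y s. 0 \<le> f x y s"
  obtains M where "partial_computable_machine M" and "prefix_free_machine M"
    and "\<And>m x s. f x x s * of_nat (Suc (2 * m)) < 1 \<Longrightarrow>
       \<exists>x' s'. M (unary_code m) [] = Some x' \<and> f x' x' s' * of_nat (Suc (2 * m)) < 1"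
proof -
  define R where "R n s = rcode (f (inv scode n) (inv scode n) s)" for n s
  have R: "total_recursive k (\<lambda>xs. R (G xs) (H xs))"
    if "total_recursive k G" "total_recursive k H" for k G H
    unfolding R_def using that
    by (intro total_recursive_compose3[OF total_recursive_computable_rat3[OF assms(1)]])
  define P where "P w c (y :: nat) \<longleftrightarrow>
    (case prod_decode w of (m, v) \<Rightarrow> case prod_decode v of (n, s) \<Rightarrow>
       c = scode (unary_code m) \<and> code_below (R n s) (Suc (2 * m)))" for w c y
  define M where "M = search_machine P (\<lambda>w. fst (prod_decode (snd (prod_decode w))))"
  show thesis
  proof
    show "partial_computable_machine M"
      unfolding M_def
      by (rule partial_computable_search_machine)
        (unfold P_def case_prod_beta, (intro total_recursive_intros R | simp)+)
    show "prefix_free_machine M"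
      unfolding M_def by (rule prefix_free_search_machine) (auto simp: P_def split: prod.splits)
  next
    fix m x s assume small: "f x x s * of_nat (Suc (2 * m)) < 1"
    let ?c = "scode (unary_code m)"
    have "P (prod_encode (m, prod_encode (scode x, s))) ?c (scode [])"
      using small by (simp add: P_def R_def code_below_rcode_iff assms(2))
    then have ex: "\<exists>w. P w ?c (scode [])" ..
    define w where "w = (LEAST w. P w ?c (scode []))"
    obtain m' v n s' where w: "prod_decode w = (m', v)" and v: "prod_decode v = (n, s')"
      by (metis surj_pair)
    have "P w ?c (scode [])"
      unfolding w_def using ex by (rule LeastI_ex)
    then have below: "code_below (R n s') (Suc (2 * m))"
      by (auto simp: P_def w v)
    have "M (unary_code m) [] = Some (inv scode (fst (prod_decode (snd (prod_decode w)))))"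
      using ex unfolding M_def search_machine_def w_def by simp
    then have "M (unary_code m) [] = Some (inv scode n)"
      by (simp add: w v)
    moreover have "f (inv scode n) (inv scode n) s' * of_nat (Suc (2 * m)) < 1"
      using below by (simp add: R_def code_below_rcode_iff assms(2))
    ultimately show "\<exists>x' s'. M (unary_code m) [] = Some x' \<and> f x' x' s' * of_nat (Suc (2 * m)) < 1"
      by blast
  qed
qed

section \<open>Complexity relative to a universal machine\<close>

lemma universal_pf_machine_simulates:
  assumes "universal_pf_machine U" and "partial_computable_machine M" and "prefix_free_machine M"
  obtains \<sigma> where "\<And>p y. U (\<sigma> @ p) y = M p y"
  using assms unfolding universal_pf_machine_def by blast

lemma universal_pf_machine_outputs:
  assumes "universal_pf_machine U"
  shows "\<exists>p. U p y = Some x"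
proof -
  obtain \<sigma> where "\<And>p y. U (\<sigma> @ p) y = decoder p y"
    using universal_pf_machine_simulates[OF assms decoder_machine] by blast
  then have "U (\<sigma> @ unary_code (scode x)) y = Some x"
    by (simp add: decoder_unary_code)
  then show ?thesis ..
qed

lemma universal_pf_machine_empty_program:
  assumes "universal_pf_machine U"
  shows "U [] y = None"
proof (rule ccontr)
  assume halts: "U [] y \<noteq> None"
  have "prefix_free_machine U"
    using assms unfolding universal_pf_machine_def by blast
  then have "U p y = Some x \<Longrightarrow> p = []" for p x
    using halts unfolding prefix_free_machine_def by force
  then have "U [] y = Some x" for x
    using universal_pf_machine_outputs[OF assms] by blast
  from this[of "[]"] this[of "[True]"] show False
    by simp
qed

lemma Kc_le_length: "U p y = Some x \<Longrightarrow> Kc U x y \<le> length p"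
  unfolding Kc_def by (rule Least_le) blast

lemma Kc_attained: "\<exists>p. U p y = Some x \<Longrightarrow> \<exists>p. length p = Kc U x y \<and> U p y = Some x"
  unfolding Kc_def by (rule LeastI_ex) blast

lemma Kc_pos:
  assumes "universal_pf_machine U"
  shows "0 < Kc U x y"
proof -
  obtain p where "length p = Kc U x y" and "U p y = Some x"
    using Kc_attained[of U y x, OF universal_pf_machine_outputs[OF assms]] by blast
  then show ?thesis
    using universal_pf_machine_empty_program[OF assms] by (cases p) auto
qed

lemma Kc_self_bounded:
  assumes "universal_pf_machine U"
  obtains c where "\<And>x. Kc U x x \<le> c"
proof -
  obtain \<sigma> where "\<And>p y. U (\<sigma> @ p) y = copier p y"
    using universal_pf_machine_simulates[OF assms copier_machine] by blast
  then have "Kc U x x \<le> length (\<sigma> @ unary_code 0)" for x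
    by (intro Kc_le_length) (simp add: copier_unary_code)
  then show thesis ..
qed

lemma K_unbounded:
  assumes "universal_pf_machine U"
  obtains x where "N < K U x"
proof -
  have "finite ((\<lambda>p. the (U p [])) ` {p :: bstr. length p \<le> N})"
    using finite_lists_length_le[of "UNIV :: bool set" N] by simp
  then obtain x where x: "x \<notin> (\<lambda>p. the (U p [])) ` {p. length p \<le> N}"
    using ex_new_if_finite[OF infinite_UNIV_listI] by blast
  obtain p where p: "length p = K U x" "U p [] = Some x"
    using Kc_attained[of U "[]" x, OF universal_pf_machine_outputs[OF assms]] unfolding K_def by blast
  have "\<not> K U x \<le> N"
  proof
    assume "K U x \<le> N"
    with p have "x \<in> (\<lambda>p. the (U p [])) ` {p. length p \<le> N}"
      by (intro image_eqI[of _ _ p]) auto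
    with x show False ..
  qed
  then have "N < K U x"
    by simp
  then show thesis ..
qed

lemma NID_self: "NID U x x = of_nat (Kc U x x) / of_nat (K U x)"
  by (simp add: NID_def E_def)

lemma NID_self_small:
  assumes "universal_pf_machine U"
  obtains x where "NID U x x * of_nat k < 1"
proof -
  obtain c where c: "\<And>x. Kc U x x \<le> c"
    using Kc_self_bounded[OF assms] by blast
  obtain x where x: "c * k < K U x"
    using K_unbounded[OF assms] by blast
  have "Kc U x x * k < K U x"
    using mult_le_mono1[OF c[of x], of k] x by linarith
  then have "(of_nat (Kc U x x * k) :: rat) < of_nat (K U x)"
    by (simp only: of_nat_less_iff)
  then have "NID U x x * of_nat k < 1"
    using x unfolding NID_self by (simp add: divide_less_eq)
  then show thesis ..
qed

lemma NID_self_lower_bound: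
  assumes "universal_pf_machine U" and "K U x \<le> k"
  shows "1 \<le> NID U x x * of_nat k"
proof -
  have "k \<le> Kc U x x * k"
    using mult_le_mono1[of 1 "Kc U x x" k] Kc_pos[OF assms(1), of x x] by simp
  with assms(2) have "(of_nat (K U x) :: rat) \<le> of_nat (Kc U x x * k)"
    by (simp only: of_nat_le_iff)
  moreover have "0 < K U x"
    using Kc_pos[OF assms(1)] unfolding K_def .
  ultimately show ?thesis
    unfolding NID_self by (simp add: le_divide_eq)
qed

lemma decreasing_approximation_ge:
  fixes f :: "nat \<Rightarrow> rat"
  assumes "\<And>s. f (Suc s) \<le> f s" and "(\<lambda>s. real_of_rat (f s)) \<longlonglongrightarrow> real_of_rat L"
  shows "L \<le> f s"
proof -
  have "decseq (\<lambda>s. real_of_rat (f s))"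
    by (rule decseq_SucI) (simp add: of_rat_less_eq assms(1))
  from decseq_ge[OF this assms(2)] show ?thesis
    by (simp add: of_rat_less_eq)
qed

lemma approximation_eventually_below:
  fixes f :: "nat \<Rightarrow> rat"
  assumes "(\<lambda>s. real_of_rat (f s)) \<longlonglongrightarrow> real_of_rat L" and "L * c < 1"
  obtains s where "f s * c < 1"
proof -
  have "(\<lambda>s. real_of_rat (f s * c)) \<longlonglongrightarrow> real_of_rat (L * c)"
    using tendsto_mult_right[OF assms(1)] by (simp add: of_rat_mult)
  moreover have "real_of_rat (L * c) < 1"
    using assms(2) by simp
  ultimately have "\<forall>\<^sub>F s in sequentially. real_of_rat (f s * c) < 1"
    by (rule order_tendstoD(2))
  then obtain s where "real_of_rat (f s * c) < 1"
    unfolding eventually_sequentially by blast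
  then show thesis
    by (intro that) simp
qed

theorem mainTheorem4:
  fixes U :: machine
  assumes "universal_pf_machine U"
  shows "\<not> in_Pi1 (NID U)"
proof
  assume "in_Pi1 (NID U)"
  then obtain f where f: "computable_rat3 f" and dec: "\<And>x y s. f x y (Suc s) \<le> f x y s"
    and lim: "\<And>x y. (\<lambda>s. real_of_rat (f x y s)) \<longlonglongrightarrow> real_of_rat (NID U x y)"
    unfolding in_Pi1_def by blast
  have above: "NID U x y \<le> f x y s" for x y s
    using decreasing_approximation_ge[OF dec lim] .
  have "0 \<le> f x y s" for x y s
    using order_trans[OF _ above[of x y s], of 0] by (simp add: NID_def)
  then obtain M where M: "partial_computable_machine M" "prefix_free_machine M"
    and finds: "\<And>m x s. f x x s * of_nat (Suc (2 * m)) < 1 \<Longrightarrow>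
       \<exists>x' s'. M (unary_code m) [] = Some x' \<and> f x' x' s' * of_nat (Suc (2 * m)) < 1"
    using small_diagonal_value_machine[OF f] by blast
  obtain \<sigma> where \<sigma>: "\<And>p y. U (\<sigma> @ p) y = M p y"
    using universal_pf_machine_simulates[OF assms M] by blast
  define k :: nat where "k = Suc (2 * length \<sigma>)"
  obtain x where "NID U x x * of_nat k < 1"
    using NID_self_small[OF assms] by blast
  then obtain s where "f x x s * of_nat k < 1"
    using approximation_eventually_below[OF lim] by blast
  then obtain x' s' where out: "M (unary_code (length \<sigma>)) [] = Some x'" and "f x' x' s' * of_nat k < 1"
    using finds unfolding k_def by blast
  have "K U x' \<le> k"
    using Kc_le_length[of U "\<sigma> @ unary_code (length \<sigma>)" "[]" x'] out
    by (simp add: \<sigma> K_def k_def unary_code_def)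
  then have "1 \<le> NID U x' x' * of_nat k"
    by (rule NID_self_lower_bound[OF assms])
  also have "\<dots> \<le> f x' x' s' * of_nat k"
    using above by (rule mult_right_mono) simp
  finally show False
    using \<open>f x' x' s' * of_nat k < 1\<close> by simp
qed

end
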